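(* Let $q$ be odd, $\alpha,\beta\in\mathbb{F}_{q^2}$ with $\alpha\ne0$ and $(\beta^q-\beta)^2+4\alpha^{q+1}$ a nonsquare in $\mathbb{F}_q$, and let $R_1=(0,\epsilon,1)$, $U_\infty=(1,0,0)$. If $\ell$ is a line of $\mathrm{PG}(2,q^2)$ not through $U_\infty$, then $|\ell\cap\mathrm{pedal}(R_1)|\in\{0,1,2\}$.
   Context: Points of $\mathrm{PG}(2,q^2)$ have homogeneous coordinates $(x,y,z)$. $\zeta$ is a primitive element of $\mathbb{F}_{q^2}$ and $\epsilon=\zeta^{(q+1)/2}$. $\mathcal U_{\alpha\beta}=\{(x,\alpha x^2+\beta x^{q+1}+r,1): x\in\mathbb{F}_{q^2}, r\in\mathbb{F}_q\}\cup\{(0,1,0)\}$, which under the hypotheses is a unital (a set of $q^3+1$ points meeting every line in $1$ or $q+1$ points), and $R_1\notin\mathcal U_{\alpha\beta}$. For a point $P$ not on the unital, $\mathrm{pedal}(P)$ is the set of points of contact of the $q+1$ tangent lines (lines meeting the unital in exactly one point) through $P$. *)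

theory Defs
  imports Main
begin

type_synonym 'a vec3 = "'a \<times> 'a \<times> 'a"

definition smul3 :: "'a::field \<Rightarrow> 'a vec3 \<Rightarrow> 'a vec3" where
  "smul3 c v = (case v of (x, y, z) \<Rightarrow> (c * x, c * y, c * z))"

definition proj_pt :: "'a::field vec3 \<Rightarrow> 'a vec3 set" where
  "proj_pt v = {smul3 c v | c. c \<noteq> 0}"

definition pg_points :: "'a::field vec3 set set" where
  "pg_points = {proj_pt v | v. v \<noteq> (0, 0, 0)}"

definition line_of :: "'a::field vec3 \<Rightarrow> 'a vec3 set set" where
  "line_of l = (case l of (a, b, c) \<Rightarrow>
     {proj_pt (x, y, z) | x y z. (x, y, z) \<noteq> (0, 0, 0) \<and> a * x + b * y + c * z = 0})"

definition pg_lines :: "'a::field vec3 set set set" where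
  "pg_lines = {line_of l | l. l \<noteq> (0, 0, 0)}"

definition in_Fq :: "nat \<Rightarrow> 'a::field \<Rightarrow> bool" where
  "in_Fq q r \<longleftrightarrow> r ^ q = r"

definition primitive_elem :: "'a::{field,finite} \<Rightarrow> bool" where
  "primitive_elem z \<longleftrightarrow> z \<noteq> 0 \<and> (\<forall>k. 0 < k \<and> k < card (UNIV :: 'a set) - 1 \<longrightarrow> z ^ k \<noteq> 1)"

definition unital_ab :: "nat \<Rightarrow> 'a::field \<Rightarrow> 'a \<Rightarrow> 'a vec3 set set" where
  "unital_ab q \<alpha> \<beta> =
     {proj_pt (x, \<alpha> * x ^ 2 + \<beta> * x ^ (q + 1) + r, 1) | x r. in_Fq q r}
     \<union> {proj_pt (0, 1, 0)}"

definition tangent_line :: "'a vec3 set set \<Rightarrow> 'a::field vec3 set set \<Rightarrow> bool" where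
  "tangent_line U L \<longleftrightarrow> L \<in> pg_lines \<and> card (L \<inter> U) = 1"

definition pedal :: "'a::field vec3 set set \<Rightarrow> 'a vec3 set \<Rightarrow> 'a vec3 set set" where
  "pedal U P = {X. \<exists>L. tangent_line U L \<and> P \<in> L \<and> X \<in> L \<inter> U}"

end

theory Submission
  imports Defs "HOL-Number_Theory.Cong" "HOL-Computational_Algebra.Polynomial"
begin

text \<open>
  Write \<open>Q(x) = \<alpha>^q x^(2q) - \<alpha> x^2 + \<delta> x^(q+1)\<close> with \<open>\<delta> = \<beta>^q - \<beta>\<close> (the
  function \<open>form\<close> below). An affine point \<open>(x, y, 1)\<close> lies on the unital iff
  \<open>Q(x) = y^q - y\<close>, and the nonsquare hypothesis says precisely that \<open>Q\<close> is anisotropic.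
  A tangent through \<open>R\<^sub>1 = (0, \<epsilon>, 1)\<close> is a line \<open>y = m x + \<epsilon>\<close> meeting the unital only
  at \<open>x\<^sub>0\<close>; on the \<open>F\<^sub>q\<close>-line \<open>x\<^sub>0 + F\<^sub>q h\<close> the form \<open>Q\<close> is a quadratic polynomial,
  and the absence of a second intersection there forces \<open>m = 2\<alpha> x\<^sub>0 - \<delta> x\<^sub>0^q\<close> and
  \<open>Q(x\<^sub>0) = 2\<epsilon>\<close>. On a line \<open>a x + b y + c = 0\<close> with \<open>a \<noteq> 0\<close> a pedal point is
  determined by \<open>t = y + \<epsilon> \<in> F\<^sub>q\<close>, and \<open>Q(x) = 2\<epsilon>\<close> becomes a quadratic equation in
  \<open>t\<close> with leading coefficient \<open>Q(-b/a) \<noteq> 0\<close>; for \<open>b = 0\<close> the point is already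
  determined by \<open>x = -c/a\<close>.
\<close>

section \<open>Finite fields\<close>

lemma power_card_UNIV_minus_one:
  fixes x :: "'a::{field,finite}"
  assumes "x \<noteq> 0"
  shows "x ^ (card (UNIV :: 'a set) - 1) = 1"
proof -
  have "(\<Prod>y\<in>UNIV - {0}. x * y) = (\<Prod>y\<in>UNIV - {0::'a}. y)"
    by (rule prod.reindex_bij_witness[of _ "\<lambda>y. y / x" "\<lambda>y. x * y"]) (use assms in auto)
  then have "x ^ (card (UNIV :: 'a set) - 1) * (\<Prod>y\<in>UNIV - {0::'a}. y) = (\<Prod>y\<in>UNIV - {0::'a}. y)"
    by (simp add: prod.distrib card_Diff_singleton)
  then show ?thesis by simp
qed

lemma power_card_UNIV_eq_self:
  fixes x :: "'a::{field,finite}"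
  shows "x ^ card (UNIV :: 'a set) = x"
proof (cases "x = 0")
  case False
  have "x ^ card (UNIV :: 'a set) = x * x ^ (card (UNIV :: 'a set) - 1)"
    using finite_UNIV_card_ge_0[where 'a='a] by (simp flip: power_Suc)
  with power_card_UNIV_minus_one[OF False] show ?thesis by simp
qed (simp add: finite_UNIV_card_ge_0)

lemma card_UNIV_field_ge_2: "2 \<le> card (UNIV :: 'a::{field,finite} set)"
proof -
  have "card {0::'a, 1} \<le> card (UNIV :: 'a set)" by (rule card_mono) auto
  then show ?thesis by simp
qed

lemma prime_CHAR_finite_field: "prime CHAR('a::{field,finite})"
  by (rule prime_CHAR_semidom) (rule finite_imp_CHAR_pos, simp)

lemma of_nat_CHAR_minus_one: "of_nat (CHAR('a) - 1) = (- 1 :: 'a::{field,finite})"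
  using finite_imp_CHAR_pos[where 'a='a] by (simp add: of_nat_diff)

lemma of_nat_mod_CHAR: "of_nat (n mod CHAR('a)) = (of_nat n :: 'a::semiring_1_cancel)"
  by (simp add: of_nat_eq_iff_cong_CHAR cong_def)

definition add_submonoid :: "'a::monoid_add set \<Rightarrow> bool" where
  "add_submonoid T \<longleftrightarrow> 0 \<in> T \<and> (\<forall>x\<in>T. \<forall>y\<in>T. x + y \<in> T)"

lemma add_submonoid_of_nat_mult:
  fixes T :: "'a::semiring_1 set"
  assumes "add_submonoid T" and "x \<in> T"
  shows "of_nat n * x \<in> T"
  using assms by (induction n) (auto simp: add_submonoid_def algebra_simps)

lemma add_submonoid_diff:
  fixes T :: "'a::{field,finite} set"
  assumes "add_submonoid T" and "x \<in> T" and "y \<in> T"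
  shows "x - y \<in> T"
proof -
  have "x + of_nat (CHAR('a) - 1) * y \<in> T"
    using assms add_submonoid_of_nat_mult[OF assms(1,3)] unfolding add_submonoid_def by blast
  then show ?thesis
    unfolding of_nat_CHAR_minus_one by simp
qed

lemma add_submonoid_of_nat_mult_cancel:
  fixes T :: "'a::{field,finite} set"
  assumes "add_submonoid T" and "of_nat n * x \<in> T" and "of_nat n \<noteq> (0::'a)"
  shows "x \<in> T"
proof -
  \<comment> \<open>The inverse of \<open>of_nat n\<close> is \<open>of_nat n ^ (N - 2)\<close>, again a natural multiple of \<open>1\<close>.\<close>
  let ?N = "card (UNIV :: 'a set)"
  have "Suc (?N - 2) = ?N - 1"
    using card_UNIV_field_ge_2[where 'a='a] by linarith
  then have "of_nat (n ^ (?N - 2)) * (of_nat n * x) = (of_nat n :: 'a) ^ (?N - 1) * x"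
    by (simp flip: power_Suc2 mult.assoc)
  also have "\<dots> = x"
    using power_card_UNIV_minus_one[OF assms(3)] by simp
  finally show ?thesis
    using add_submonoid_of_nat_mult[OF assms(1,2)] by metis
qed

lemma inj_on_add_submonoid_translates:
  fixes T :: "'a::{field,finite} set"
  assumes T: "add_submonoid T" and s: "s \<notin> T"
  shows "inj_on (\<lambda>(t, i). t + of_nat i * s) (T \<times> {..<CHAR('a)})"
proof (rule inj_onI, clarsimp)
  let ?p = "CHAR('a)"
  fix t i t' j
  assume "t \<in> T" "t' \<in> T" "i < ?p" "j < ?p" and eq: "t + of_nat i * s = t' + of_nat j * s"
  have ij: "of_nat (i + (?p - 1) * j) = (of_nat i - of_nat j :: 'a)"
    unfolding of_nat_add of_nat_mult of_nat_CHAR_minus_one by simp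
  have "of_nat (i + (?p - 1) * j) * s = t' - t"
    unfolding ij using eq by (simp add: algebra_simps)
  with T s \<open>t \<in> T\<close> \<open>t' \<in> T\<close> have "of_nat (i + (?p - 1) * j) = (0::'a)"
    using add_submonoid_diff add_submonoid_of_nat_mult_cancel by metis
  then have "of_nat i = (of_nat j :: 'a)"
    unfolding ij by simp
  then have "i = j"
    using \<open>i < ?p\<close> \<open>j < ?p\<close> by (simp add: of_nat_eq_iff_cong_CHAR cong_less_modulus_unique_nat)
  with eq show "t = t' \<and> i = j" by simp
qed

lemma add_submonoid_extend:
  fixes T :: "'a::{field,finite} set"
  assumes T: "add_submonoid T" and s: "s \<notin> T"
  defines "T' \<equiv> (\<lambda>(t, i). t + of_nat i * s) ` (T \<times> {..<CHAR('a)})"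
  shows "add_submonoid T'" and "card T' = CHAR('a) * card T"
proof -
  let ?p = "CHAR('a)"
  have p_pos: "0 < ?p" by (simp add: finite_imp_CHAR_pos)
  show "add_submonoid T'"
    unfolding add_submonoid_def
  proof (intro conjI ballI)
    show "0 \<in> T'"
      unfolding T'_def using T p_pos
      by (intro image_eqI[where x="(0, 0)"]) (auto simp: add_submonoid_def)
  next
    fix x y assume "x \<in> T'" "y \<in> T'"
    then obtain t i t' j where x: "x = t + of_nat i * s" "t \<in> T"
      and y: "y = t' + of_nat j * s" "t' \<in> T"
      unfolding T'_def by auto
    have "x + y = (t + t') + of_nat ((i + j) mod ?p) * s"
      unfolding x y of_nat_mod_CHAR by (simp add: algebra_simps)
    moreover have "t + t' \<in> T" using T x y by (simp add: add_submonoid_def)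
    ultimately show "x + y \<in> T'"
      unfolding T'_def using p_pos
      by (intro image_eqI[where x="(t + t', (i + j) mod ?p)"]) auto
  qed
  show "card T' = ?p * card T"
    unfolding T'_def using inj_on_add_submonoid_translates[OF T s]
    by (simp add: card_image card_cartesian_product)
qed

lemma card_UNIV_CHAR_power: "\<exists>n. card (UNIV :: 'a::{field,finite} set) = CHAR('a) ^ n"
proof -
  have "\<exists>n. card (UNIV :: 'a set) = CHAR('a) ^ n"
    if "add_submonoid T" and "card T = CHAR('a) ^ k" for T :: "'a set" and k
    using that
  proof (induction "card (UNIV :: 'a set) - card T" arbitrary: T k rule: less_induct)
    case (less T)
    show ?case
    proof (cases "T = UNIV")
      case True
      with less.prems show ?thesis by auto
    next
      case False
      then obtain s where s: "s \<notin> T" by auto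
      define T' where "T' = (\<lambda>(t, i). t + of_nat i * s) ` (T \<times> {..<CHAR('a)})"
      note T' = add_submonoid_extend[OF less.prems(1) s, folded T'_def]
      have "1 < CHAR('a)" using prime_CHAR_finite_field prime_gt_1_nat by blast
      moreover have "0 < card T" using less.prems(1) by (auto simp: add_submonoid_def card_gt_0_iff)
      ultimately have "card T < card T'" using T'(2) by simp
      moreover have "card T' \<le> card (UNIV :: 'a set)" by (rule card_mono) auto
      ultimately have "card (UNIV :: 'a set) - card T' < card (UNIV :: 'a set) - card T" by linarith
      moreover have "card T' = CHAR('a) ^ Suc k"
        using T'(2) less.prems(2) by simp
      ultimately show ?thesis
        using less.hyps T'(1) by blast
    qed
  qed
  moreover have "add_submonoid {0::'a}" by (simp add: add_submonoid_def)
  moreover have "card {0::'a} = CHAR('a) ^ 0" by simp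
  ultimately show ?thesis by blast
qed

lemma power_add_of_dvd_card:
  fixes x y :: "'a::{field,finite}"
  assumes "q dvd card (UNIV :: 'a set)"
  shows "(x + y) ^ q = x ^ q + y ^ q"
proof -
  obtain n where "card (UNIV :: 'a set) = CHAR('a) ^ n" using card_UNIV_CHAR_power by blast
  with assms have "q dvd CHAR('a) ^ n" by simp
  then obtain i where "q = CHAR('a) ^ i"
    by (auto simp: divides_primepow_nat[OF prime_CHAR_finite_field])
  then show ?thesis by (rule freshmans_dream'[OF prime_CHAR_finite_field])
qed

lemma primitive_elem_power_half:
  fixes \<zeta> :: "'a::{field,finite}"
  assumes \<zeta>: "primitive_elem \<zeta>" and card: "card (UNIV :: 'a set) = Suc (2 * k)"
  shows "\<zeta> ^ k = - 1" and "\<zeta> ^ k \<noteq> 1"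
proof -
  have "0 < k" using card_UNIV_field_ge_2[where 'a='a] card by simp
  then show ne1: "\<zeta> ^ k \<noteq> 1"
    using \<zeta> card by (simp add: primitive_elem_def)
  have "\<zeta> ^ k * \<zeta> ^ k = \<zeta> ^ (card (UNIV :: 'a set) - 1)"
    unfolding card by (simp add: mult_2 power_add)
  also have "\<dots> = 1"
    using \<zeta> by (intro power_card_UNIV_minus_one) (simp add: primitive_elem_def)
  finally have "(\<zeta> ^ k - 1) * (\<zeta> ^ k + 1) = 0"
    by (simp add: algebra_simps)
  with ne1 show "\<zeta> ^ k = - 1"
    by (simp add: eq_neg_iff_add_eq_0)
qed

lemma primitive_elem_half_power_conj:
  fixes \<zeta> :: "'a::{field,finite}"
  assumes \<zeta>: "primitive_elem \<zeta>" and card: "card (UNIV :: 'a set) = q ^ 2" and "odd q"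
  defines "\<epsilon> \<equiv> \<zeta> ^ ((q + 1) div 2)"
  shows "\<epsilon> ^ q = - \<epsilon>" and "\<epsilon> ^ q \<noteq> \<epsilon>"
proof -
  obtain j where q: "q = 2 * j + 1" using \<open>odd q\<close> oddE by blast
  define k where "k = 2 * j * (j + 1)"
  have "card (UNIV :: 'a set) = Suc (2 * k)"
    unfolding card q k_def by (simp add: power2_eq_square algebra_simps)
  note half = primitive_elem_power_half[OF \<zeta> this]
  have "(q + 1) div 2 * q = (q + 1) div 2 + k"
    unfolding q k_def by (simp add: algebra_simps)
  then have "\<epsilon> ^ q = \<epsilon> * \<zeta> ^ k"
    unfolding \<epsilon>_def by (metis power_add power_mult)
  moreover have "\<epsilon> \<noteq> 0"
    using \<zeta> by (simp add: \<epsilon>_def primitive_elem_def)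
  ultimately show "\<epsilon> ^ q = - \<epsilon>" and "\<epsilon> ^ q \<noteq> \<epsilon>"
    using half by auto
qed

section \<open>The projective plane and the unital\<close>

lemma smul3_simps [simp]: "smul3 c (x, y, z) = (c * x, c * y, c * z)"
  by (simp add: smul3_def)

lemma proj_pt_self: "v \<in> proj_pt v"
  unfolding proj_pt_def by (rule CollectI, rule exI[of _ 1]) (cases v, auto)

lemma proj_pt_eqD: "proj_pt v = proj_pt w \<Longrightarrow> \<exists>c. c \<noteq> 0 \<and> v = smul3 c w"
  using proj_pt_self[of v] unfolding proj_pt_def by auto

lemma proj_pt_affine_eq_iff:
  "proj_pt (x, y, 1) = proj_pt (x', y', (1::'a::field)) \<longleftrightarrow> x = x' \<and> y = y'"
  using proj_pt_eqD[of "(x, y, 1)" "(x', y', 1)"] by auto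

lemma proj_pt_affine_neq_infinite: "proj_pt (x, y, 1) \<noteq> proj_pt (x', y', (0::'a::field))"
  using proj_pt_eqD[of "(x, y, 1)" "(x', y', 0)"] by auto

lemma proj_pt_in_line_of_iff:
  fixes x y z :: "'a::field"
  assumes "(x, y, z) \<noteq> (0, 0, 0)"
  shows "proj_pt (x, y, z) \<in> line_of (a, b, c) \<longleftrightarrow> a * x + b * y + c * z = 0"
proof
  assume "proj_pt (x, y, z) \<in> line_of (a, b, c)"
  then obtain x' y' z' where eq: "proj_pt (x, y, z) = proj_pt (x', y', z')"
    and on: "a * x' + b * y' + c * z' = 0"
    unfolding line_of_def by auto
  from proj_pt_eqD[OF eq] obtain k where "(x, y, z) = smul3 k (x', y', z')" by blast
  then have "a * x + b * y + c * z = k * (a * x' + b * y' + c * z')"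
    by (simp add: algebra_simps)
  with on show "a * x + b * y + c * z = 0" by simp
next
  assume "a * x + b * y + c * z = 0"
  with assms show "proj_pt (x, y, z) \<in> line_of (a, b, c)"
    unfolding line_of_def by blast
qed

lemma line_of_smul:
  fixes l :: "'a::field vec3"
  assumes "k \<noteq> 0"
  shows "line_of (smul3 k l) = line_of l"
proof -
  obtain a b c where l: "l = (a, b, c)" by (cases l)
  have "k * a * x + k * b * y + k * c * z = k * (a * x + b * y + c * z)" for x y z
    by (simp add: algebra_simps)
  with assms show ?thesis
    unfolding l line_of_def by simp
qed

lemma unital_ab_affine_iff:
  "proj_pt (x, y, 1) \<in> unital_ab q \<alpha> \<beta> \<longleftrightarrow> in_Fq q (y - \<alpha> * x ^ 2 - \<beta> * x ^ (q + 1))"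
proof
  assume "proj_pt (x, y, 1) \<in> unital_ab q \<alpha> \<beta>"
  then obtain x' r where "proj_pt (x, y, 1) = proj_pt (x', \<alpha> * x' ^ 2 + \<beta> * x' ^ (q + 1) + r, 1)"
    and "in_Fq q r"
    unfolding unital_ab_def using proj_pt_affine_neq_infinite by blast
  then show "in_Fq q (y - \<alpha> * x ^ 2 - \<beta> * x ^ (q + 1))"
    by (simp add: proj_pt_affine_eq_iff)
next
  assume "in_Fq q (y - \<alpha> * x ^ 2 - \<beta> * x ^ (q + 1))"
  then show "proj_pt (x, y, 1) \<in> unital_ab q \<alpha> \<beta>"
    unfolding unital_ab_def
    by (intro UnI1 CollectI exI[of _ x] exI[of _ "y - \<alpha> * x ^ 2 - \<beta> * x ^ (q + 1)"]) simp
qed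

lemma infinite_point_in_unital_ab: "proj_pt (0, 1, 0) \<in> unital_ab q \<alpha> \<beta>"
  unfolding unital_ab_def by simp

lemma unital_ab_cases:
  "X \<in> unital_ab q \<alpha> \<beta> \<Longrightarrow> X = proj_pt (0, 1, 0) \<or> (\<exists>x y. X = proj_pt (x, y, 1))"
  unfolding unital_ab_def by blast

section \<open>Pedal points of \<open>R\<^sub>1\<close>\<close>

lemma card_quadratic_roots_le_2:
  fixes A B C :: "'a::field"
  assumes "A \<noteq> 0"
  shows "card {t. A * t ^ 2 + B * t + C = 0} \<le> 2"
proof -
  have "{t. A * t ^ 2 + B * t + C = 0} = {t. poly [:C, B, A:] t = 0}"
    by (auto simp: algebra_simps power2_eq_square)
  also have "card \<dots> \<le> degree [:C, B, A:]"
    using assms by (intro card_poly_roots_bound) auto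
  finally show ?thesis
    using assms by simp
qed

locale unital_pedal =
  fixes q :: nat and \<alpha> \<beta> \<epsilon> :: "'a::{field,finite}"
  assumes conj_add: "\<And>x y :: 'a. (x + y) ^ q = x ^ q + y ^ q"
    and conj_conj: "\<And>x :: 'a. (x ^ q) ^ q = x"
    and eps_conj: "\<epsilon> ^ q = - \<epsilon>"
    and eps_not_in_Fq: "\<not> in_Fq q \<epsilon>"
    and nonsquare: "\<not> (\<exists>y. in_Fq q y \<and> y ^ 2 = (\<beta> ^ q - \<beta>) ^ 2 + 4 * \<alpha> ^ (q + 1))"
begin

lemma conj_zero [simp]: "(0::'a) ^ q = 0"
  using conj_conj[of 0] by (cases q) auto

lemma conj_neg: "(- x :: 'a) ^ q = - (x ^ q)"
  using conj_add[of x "- x"] by (simp add: eq_neg_iff_add_eq_0 add.commute)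

lemma conj_diff: "(x - y :: 'a) ^ q = x ^ q - y ^ q"
  using conj_add[of x "- y"] by (simp add: conj_neg)

lemma conj_square: "((x :: 'a) ^ 2) ^ q = (x ^ q) ^ 2"
  by (simp only: mult.commute flip: power_mult)

lemma conj_two: "(2::'a) ^ q = 2"
  using conj_add[of 1 1] by simp

lemma conj_eq_0_iff: "(x :: 'a) ^ q = 0 \<longleftrightarrow> x = 0"
  by (metis conj_conj conj_zero)

lemmas conj_simps = conj_add conj_neg conj_diff conj_square conj_two power_divide
  power_mult_distrib conj_conj eps_conj

lemma two_eps_nonzero: "2 * \<epsilon> \<noteq> 0"
proof
  assume "2 * \<epsilon> = 0"
  then have "\<epsilon> = - \<epsilon>"
    by (simp only: mult_2 add_eq_0_iff2)
  with eps_conj eps_not_in_Fq show False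
    by (metis in_Fq_def)
qed

definition \<delta> :: 'a where
  "\<delta> = \<beta> ^ q - \<beta>"

definition form :: "'a \<Rightarrow> 'a" where
  "form x = \<alpha> ^ q * (x ^ q) ^ 2 - \<alpha> * x ^ 2 + \<delta> * x * x ^ q"

definition slope :: "'a \<Rightarrow> 'a" where
  "slope x = 2 * \<alpha> * x - \<delta> * x ^ q"

lemma delta_conj: "\<delta> ^ q = - \<delta>"
  unfolding \<delta>_def by (simp add: conj_simps)

lemma form_conj: "form x ^ q = - form x"
  unfolding form_def by (simp add: conj_simps delta_conj algebra_simps)

lemma unital_affine_iff: "proj_pt (x, y, 1) \<in> unital_ab q \<alpha> \<beta> \<longleftrightarrow> form x = y ^ q - y"
proof -
  let ?r = "y - \<alpha> * x ^ 2 - \<beta> * x ^ (q + 1)"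
  have "?r ^ q - ?r = (y ^ q - y) - form x"
    unfolding form_def \<delta>_def by (simp add: conj_simps power_add algebra_simps)
  then have "?r ^ q = ?r \<longleftrightarrow> form x = y ^ q - y"
    by (metis eq_iff_diff_eq_0)
  then show ?thesis
    by (simp only: unital_ab_affine_iff in_Fq_def)
qed

lemma form_add_scaled:
  assumes "t ^ q = t"
  shows "form (u + t * v) = form u + t * ((slope u * v) ^ q - slope u * v) + t ^ 2 * form v"
  unfolding form_def slope_def using assms
  by (simp add: conj_simps delta_conj) (simp add: algebra_simps power2_eq_square)

lemma form_nonzero:
  assumes "x \<noteq> 0"
  shows "form x \<noteq> 0"
proof
  assume form0: "form x = 0"
  have "x ^ q \<noteq> 0" using assms conj_eq_0_iff by simp
  define u where "u = x ^ q / x"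
  have "u \<noteq> 0" using \<open>x ^ q \<noteq> 0\<close> assms by (simp add: u_def)
  have u_conj: "u ^ q = 1 / u" using \<open>x ^ q \<noteq> 0\<close> assms by (simp add: u_def conj_simps)
  have u_root: "\<alpha> ^ q * u ^ 2 + \<delta> * u - \<alpha> = 0"
  proof -
    have "\<alpha> ^ q * u ^ 2 + \<delta> * u - \<alpha> = form x / x ^ 2"
      using assms by (simp add: u_def form_def field_simps power2_eq_square)
    then show ?thesis using form0 by simp
  qed
  define y where "y = 2 * \<alpha> ^ q * u + \<delta>"
  have "y - y ^ q = 2 * (\<alpha> ^ q * u ^ 2 + \<delta> * u - \<alpha>) / u"
    using \<open>u \<noteq> 0\<close> unfolding y_def
    by (simp add: conj_simps u_conj delta_conj field_simps power2_eq_square)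
  then have "in_Fq q y" using u_root by (simp add: in_Fq_def)
  moreover have "y ^ 2 = 4 * \<alpha> ^ q * (\<alpha> ^ q * u ^ 2 + \<delta> * u - \<alpha>) + \<delta> ^ 2 + 4 * \<alpha> ^ (q + 1)"
    by (simp add: y_def algebra_simps power2_eq_square)
  ultimately show False
    using nonsquare u_root by (auto simp: \<delta>_def)
qed

lemma slope_of_unique_point:
  assumes on: "form x0 = (m * x0 + \<epsilon>) ^ q - (m * x0 + \<epsilon>)"
    and unique: "\<And>x. form x = (m * x + \<epsilon>) ^ q - (m * x + \<epsilon>) \<Longrightarrow> x = x0"
  shows "m = slope x0"
proof (rule ccontr)
  assume "m \<noteq> slope x0"
  \<comment> \<open>Along \<open>x0 + F\<^sub>q h\<close> the line meets the unital where \<open>t (t form(h) - 2\<epsilon>) = 0\<close>,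
    so \<open>t = 2\<epsilon> / form(h)\<close> gives a second intersection point.\<close>
  define h where "h = \<epsilon> / (slope x0 - m)"
  define t where "t = 2 * \<epsilon> / form h"
  have h_eq: "(slope x0 - m) * h = \<epsilon>"
    using \<open>m \<noteq> slope x0\<close> by (simp add: h_def)
  have "h \<noteq> 0" using h_eq two_eps_nonzero by auto
  then have "form h \<noteq> 0" by (rule form_nonzero)
  then have "t \<noteq> 0" and t_in_Fq: "t ^ q = t"
    using two_eps_nonzero by (simp_all add: t_def conj_simps form_conj)
  have "form (x0 + t * h) - ((m * (x0 + t * h) + \<epsilon>) ^ q - (m * (x0 + t * h) + \<epsilon>))
      = t * ((((slope x0 - m) * h) ^ q - (slope x0 - m) * h)) + t ^ 2 * form h"
    unfolding form_add_scaled[OF t_in_Fq] on using t_in_Fq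
    by (simp add: conj_simps) (simp add: algebra_simps)
  also have "\<dots> = 0"
    unfolding h_eq using \<open>form h \<noteq> 0\<close> by (simp add: conj_simps t_def power2_eq_square)
  finally have "x0 + t * h = x0" by (intro unique) simp
  with \<open>t \<noteq> 0\<close> \<open>h \<noteq> 0\<close> show False by simp
qed

lemma slope_mult_self_conj: "(slope x * x) ^ q = slope x * x + 2 * form x"
  unfolding slope_def form_def by (simp add: conj_simps delta_conj algebra_simps power2_eq_square)

lemma form_eq_two_eps_of_slope:
  assumes "form x = (slope x * x + \<epsilon>) ^ q - (slope x * x + \<epsilon>)"
  shows "form x = 2 * \<epsilon>"
proof -
  have "form x = 2 * form x - 2 * \<epsilon>"
    using assms unfolding conj_add slope_mult_self_conj eps_conj by (simp add: algebra_simps)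
  then show ?thesis by algebra
qed

lemma tangent_line_through_R1:
  assumes tangent: "tangent_line (unital_ab q \<alpha> \<beta>) L" and R1: "proj_pt (0, \<epsilon>, 1) \<in> L"
  shows "\<exists>m. L = line_of (m, -1, \<epsilon>)"
proof -
  obtain a b c where L: "L = line_of (a, b, c)"
    using tangent by (auto simp: tangent_line_def pg_lines_def)
  have "b * \<epsilon> + c = 0"
    using R1 unfolding L by (simp add: proj_pt_in_line_of_iff)
  have "b \<noteq> 0"
  proof
    assume "b = 0"
    with \<open>b * \<epsilon> + c = 0\<close> have "proj_pt (0, 0, 1) \<in> L \<inter> unital_ab q \<alpha> \<beta>"
      and "proj_pt (0, 1, 0) \<in> L \<inter> unital_ab q \<alpha> \<beta>"
      unfolding L by (simp_all add: proj_pt_in_line_of_iff unital_affine_iff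
          infinite_point_in_unital_ab form_def)
    moreover obtain Z where "L \<inter> unital_ab q \<alpha> \<beta> = {Z}"
      using tangent by (auto simp: tangent_line_def card_1_singleton_iff)
    ultimately show False
      using proj_pt_affine_neq_infinite by (metis singletonD)
  qed
  have "c = - (b * \<epsilon>)"
    using \<open>b * \<epsilon> + c = 0\<close> by (simp add: eq_neg_iff_add_eq_0 add.commute)
  with \<open>b \<noteq> 0\<close> have "(a, b, c) = smul3 (- b) (- a / b, -1, \<epsilon>)"
    by simp
  then have "L = line_of (smul3 (- b) (- a / b, -1, \<epsilon>))"
    unfolding L by (rule arg_cong)
  also have "\<dots> = line_of (- a / b, -1, \<epsilon>)"
    using \<open>b \<noteq> 0\<close> by (intro line_of_smul) simp
  finally show ?thesis ..
qed

lemma pedal_point_coords: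
  assumes "X \<in> pedal (unital_ab q \<alpha> \<beta>) (proj_pt (0, \<epsilon>, 1))"
  shows "\<exists>x. X = proj_pt (x, slope x * x + \<epsilon>, 1) \<and> form x = 2 * \<epsilon>"
proof -
  let ?U = "unital_ab q \<alpha> \<beta>"
  obtain L where tangent: "tangent_line ?U L" and "proj_pt (0, \<epsilon>, 1) \<in> L"
    and X: "X \<in> L \<inter> ?U"
    using assms unfolding pedal_def by blast
  then obtain m where L: "L = line_of (m, -1, \<epsilon>)"
    using tangent_line_through_R1 by blast
  have "card (L \<inter> ?U) = 1" using tangent by (simp add: tangent_line_def)
  with X have unique: "Y = X" if "Y \<in> L" "Y \<in> ?U" for Y
    using that by (metis IntI card_1_singletonE singletonD)
  have on_L: "proj_pt (x, y, 1) \<in> L \<longleftrightarrow> y = m * x + \<epsilon>" for x y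
    unfolding L by (auto simp: proj_pt_in_line_of_iff field_simps)
  have "proj_pt (0, 1, 0) \<notin> L"
    unfolding L by (simp add: proj_pt_in_line_of_iff)
  with X obtain x0 y where X_xy: "X = proj_pt (x0, y, 1)"
    using unital_ab_cases by blast
  with X on_L have X_eq: "X = proj_pt (x0, m * x0 + \<epsilon>, 1)"
    by auto
  have on: "form x0 = (m * x0 + \<epsilon>) ^ q - (m * x0 + \<epsilon>)"
    using X unfolding X_eq by (simp add: unital_affine_iff)
  have "x = x0" if "form x = (m * x + \<epsilon>) ^ q - (m * x + \<epsilon>)" for x
    using unique[of "proj_pt (x, m * x + \<epsilon>, 1)"] that
    by (simp add: on_L unital_affine_iff X_eq proj_pt_affine_eq_iff)
  then have "m = slope x0"
    by (rule slope_of_unique_point[OF on])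
  moreover from on have "form x0 = 2 * \<epsilon>"
    unfolding \<open>m = slope x0\<close> by (rule form_eq_two_eps_of_slope)
  ultimately show ?thesis
    using X_eq by auto
qed

text \<open>A pedal point on a line \<open>x = p + k (y + \<epsilon>)\<close> is \<open>(p + k t, t - \<epsilon>, 1)\<close> for a parameter \<open>t\<close>
  in the following set.\<close>

definition pedal_params :: "'a \<Rightarrow> 'a \<Rightarrow> 'a set" where
  "pedal_params p k =
     {t. t ^ q = t \<and> form (p + k * t) = 2 * \<epsilon> \<and> t = slope (p + k * t) * (p + k * t) + 2 * \<epsilon>}"

lemma card_pedal_params_le_2: "card (pedal_params p k) \<le> 2"
proof (cases "k = 0")
  case True
  have "pedal_params p k \<subseteq> {slope p * p + 2 * \<epsilon>}"
  proof
    fix t assume "t \<in> pedal_params p k"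
    then have "t = slope (p + k * t) * (p + k * t) + 2 * \<epsilon>"
      by (simp add: pedal_params_def)
    then show "t \<in> {slope p * p + 2 * \<epsilon>}"
      unfolding True by simp
  qed
  then have "card (pedal_params p k) \<le> card {slope p * p + 2 * \<epsilon>}"
    by (rule card_mono[rotated]) simp
  then show ?thesis by simp
next
  case False
  let ?B = "(slope p * k) ^ q - slope p * k"
  have "card (pedal_params p k) \<le> card {t. form k * t ^ 2 + ?B * t + (form p - 2 * \<epsilon>) = 0}"
  proof (intro card_mono subsetI CollectI)
    fix t assume "t \<in> pedal_params p k"
    then have "form (p + t * k) = 2 * \<epsilon>" and "t ^ q = t"
      by (simp_all add: pedal_params_def mult.commute[of t k])
    then have sum: "form p + t * ?B + t ^ 2 * form k = 2 * \<epsilon>"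
      by (simp add: form_add_scaled)
    have "form k * t ^ 2 + ?B * t + (form p - 2 * \<epsilon>) = (form p + t * ?B + t ^ 2 * form k) - 2 * \<epsilon>"
      by (simp add: algebra_simps)
    with sum show "form k * t ^ 2 + ?B * t + (form p - 2 * \<epsilon>) = 0"
      by simp
  qed simp
  also have "\<dots> \<le> 2"
    using False by (intro card_quadratic_roots_le_2 form_nonzero)
  finally show ?thesis .
qed

lemma pedal_point_on_line:
  assumes "a \<noteq> 0" and "X \<in> line_of (a, b, c)"
    and "X \<in> pedal (unital_ab q \<alpha> \<beta>) (proj_pt (0, \<epsilon>, 1))"
  defines "p \<equiv> (b * \<epsilon> - c) / a" and "k \<equiv> - b / a"
  shows "X \<in> (\<lambda>t. proj_pt (p + k * t, t - \<epsilon>, 1)) ` pedal_params p k"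
proof -
  obtain x where X_eq: "X = proj_pt (x, slope x * x + \<epsilon>, 1)" and "form x = 2 * \<epsilon>"
    using pedal_point_coords assms(3) by blast
  define t where "t = slope x * x + 2 * \<epsilon>"
  have "t ^ q = (slope x * x) ^ q + (2 * \<epsilon>) ^ q"
    unfolding t_def by (rule conj_add)
  also have "\<dots> = t"
    unfolding slope_mult_self_conj \<open>form x = 2 * \<epsilon>\<close> t_def
    by (simp add: conj_two eps_conj)
  finally have "t ^ q = t" .
  have "a * x + b * (t - \<epsilon>) + c = 0"
    using assms(2) unfolding X_eq t_def by (simp add: proj_pt_in_line_of_iff algebra_simps)
  then have "a * x = b * \<epsilon> - c - b * t"
    by algebra
  then have "x = (b * \<epsilon> - c - b * t) / a"
    using \<open>a \<noteq> 0\<close> by (simp add: field_simps)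
  also have "\<dots> = p + k * t"
    using \<open>a \<noteq> 0\<close> by (simp add: p_def k_def field_simps)
  finally have x_eq: "x = p + k * t" .
  have "t \<in> pedal_params p k"
    unfolding pedal_params_def mem_Collect_eq x_eq[symmetric]
    using \<open>t ^ q = t\<close> \<open>form x = 2 * \<epsilon>\<close> t_def by blast
  moreover have "X = proj_pt (p + k * t, t - \<epsilon>, 1)"
    unfolding X_eq by (subst x_eq[symmetric]) (simp add: t_def add.commute)
  ultimately show ?thesis by blast
qed

lemma card_line_inter_pedal_le_2:
  assumes "L \<in> pg_lines" and "proj_pt (1, 0, 0) \<notin> L"
  shows "card (L \<inter> pedal (unital_ab q \<alpha> \<beta>) (proj_pt (0, \<epsilon>, 1))) \<le> 2"
proof -
  obtain a b c where L: "L = line_of (a, b, c)"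
    using assms(1) unfolding pg_lines_def by auto
  have "a \<noteq> 0" using assms(2) unfolding L by (simp add: proj_pt_in_line_of_iff)
  define p where "p = (b * \<epsilon> - c) / a"
  define k where "k = - b / a"
  have "L \<inter> pedal (unital_ab q \<alpha> \<beta>) (proj_pt (0, \<epsilon>, 1))
      \<subseteq> (\<lambda>t. proj_pt (p + k * t, t - \<epsilon>, 1)) ` pedal_params p k"
    using pedal_point_on_line[OF \<open>a \<noteq> 0\<close>] unfolding L p_def k_def by blast
  then have "card (L \<inter> pedal (unital_ab q \<alpha> \<beta>) (proj_pt (0, \<epsilon>, 1))) \<le> card (pedal_params p k)"
    by (meson card_image_le card_mono finite le_trans)
  also have "\<dots> \<le> 2"
    by (rule card_pedal_params_le_2)
  finally show ?thesis .
qed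

end

theorem lemma2p4:
  fixes q :: nat and \<alpha> \<beta> \<zeta> :: "'a::{field,finite}"
  assumes card: "card (UNIV :: 'a set) = q ^ 2"
    and q_odd: "odd q"
    and zeta: "primitive_elem \<zeta>"
    and alpha: "\<alpha> \<noteq> 0"
    and nonsq: "\<not> (\<exists>y. in_Fq q y \<and> y ^ 2 = (\<beta> ^ q - \<beta>) ^ 2 + 4 * \<alpha> ^ (q + 1))"
    and line: "L \<in> pg_lines"
    and notU: "proj_pt (1, 0, 0) \<notin> L"
  shows "card (L \<inter> pedal (unital_ab q \<alpha> \<beta>) (proj_pt (0, \<zeta> ^ ((q + 1) div 2), 1))) \<in> {0, 1, 2}"
proof -
  define \<epsilon> where "\<epsilon> = \<zeta> ^ ((q + 1) div 2)"
  have conj_add: "(x + y) ^ q = x ^ q + y ^ q" for x y :: 'a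
    using card by (intro power_add_of_dvd_card) simp
  have conj_conj: "(x ^ q) ^ q = x" for x :: 'a
    using power_card_UNIV_eq_self[of x] card by (simp add: power2_eq_square flip: power_mult)
  interpret unital_pedal q \<alpha> \<beta> \<epsilon>
    using conj_add conj_conj primitive_elem_half_power_conj[OF zeta card q_odd] nonsq
    by unfold_locales (simp_all add: \<epsilon>_def in_Fq_def)
  have at_most_2: "n \<in> {0, 1, 2}" if "n \<le> 2" for n :: nat
    using that by auto
  have "card (L \<inter> pedal (unital_ab q \<alpha> \<beta>) (proj_pt (0, \<epsilon>, 1))) \<le> 2"
    using line notU by (rule card_line_inter_pedal_le_2)
  then show ?thesis
    unfolding \<epsilon>_def by (rule at_most_2)
qed

end
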